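(* Let $k$ be a positive integer and $C$ be a simplicial complex whose $1$-skeleton has a proper $2k$-colouring. Then $C$ has a proper edge-colouring with $2k-1$ colours.
   Context: An edge-colouring of a simplicial complex $C$ is proper if for every $2$-cell $f$ of $C$, any two distinct edges of $f$ receive distinct colours. *)

theory Defs
  imports Main
begin

definition simplicial_complex :: "'a set set \<Rightarrow> bool" where
  "simplicial_complex C \<longleftrightarrow>
     (\<forall>\<sigma>\<in>C. finite \<sigma> \<and> \<sigma> \<noteq> {}) \<and>
     (\<forall>\<sigma>\<in>C. \<forall>\<tau>. \<tau> \<subseteq> \<sigma> \<and> \<tau> \<noteq> {} \<longrightarrow> \<tau> \<in> C)"

definition vertices :: "'a set set \<Rightarrow> 'a set" where
  "vertices C = {v. {v} \<in> C}"

definition edges :: "'a set set \<Rightarrow> 'a set set" where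
  "edges C = {e \<in> C. card e = 2}"

definition cells2 :: "'a set set \<Rightarrow> 'a set set" where
  "cells2 C = {f \<in> C. card f = 3}"

definition proper_skeleton_colouring :: "'a set set \<Rightarrow> nat \<Rightarrow> ('a \<Rightarrow> nat) \<Rightarrow> bool" where
  "proper_skeleton_colouring C n c \<longleftrightarrow>
     (\<forall>v\<in>vertices C. c v < n) \<and>
     (\<forall>u v. {u, v} \<in> edges C \<longrightarrow> c u \<noteq> c v)"

definition proper_edge_colouring :: "'a set set \<Rightarrow> nat \<Rightarrow> ('a set \<Rightarrow> nat) \<Rightarrow> bool" where
  "proper_edge_colouring C n col \<longleftrightarrow>
     (\<forall>e\<in>edges C. col e < n) \<and>
     (\<forall>f\<in>cells2 C. \<forall>e1 e2. e1 \<in> edges C \<and> e2 \<in> edges C \<and> e1 \<subseteq> f \<and> e2 \<subseteq> f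
        \<and> e1 \<noteq> e2 \<longrightarrow> col e1 \<noteq> col e2)"

end

theory Submission
  imports Defs "HOL-Number_Theory.Cong"
begin

text \<open>The complete graph on the colour set \<open>{0..2k-1}\<close> has a proper edge colouring with
\<open>m = 2k - 1\<close> colours, the round-robin schedule: read \<open>0, \<dots>, m - 1\<close> as residues mod \<open>m\<close> and
\<open>m\<close> as a point at infinity, colour \<open>{a, b}\<close> by \<open>a + b\<close> and \<open>{a, \<infinity>}\<close> by \<open>2a\<close>; since \<open>m\<close> is
odd, the edges at any vertex get distinct colours. Colour an edge \<open>{u, v}\<close> of \<open>C\<close> by the
round-robin colour of \<open>{c u, c v}\<close>, where \<open>c\<close> is the given vertex colouring. The three
vertices of a 2-cell have three distinct colours and two of its edges share a vertex, so
they are mapped to two edges of the complete graph sharing a vertex.\<close>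

definition round_robin_colour :: "nat \<Rightarrow> nat set \<Rightarrow> nat" where
  "round_robin_colour m S = (if m \<in> S then 2 * the_elem (S - {m}) else \<Sum>S) mod m"

lemma round_robin_colour_pair:
  assumes "a \<noteq> b"
  shows "round_robin_colour m {a, b} = (if a = m then 2 * b else if b = m then 2 * a else a + b) mod m"
  using assms by (auto simp: round_robin_colour_def insert_Diff_if)

lemma round_robin_colour_less: "0 < m \<Longrightarrow> round_robin_colour m S < m"
  by (simp add: round_robin_colour_def)

lemma round_robin_colour_adjacent_distinct:
  assumes "odd m" "a \<le> m" "b \<le> m" "d \<le> m" "a \<noteq> b" "a \<noteq> d" "b \<noteq> d"
  shows "round_robin_colour m {a, b} \<noteq> round_robin_colour m {a, d}"
proof
  assume eq: "round_robin_colour m {a, b} = round_robin_colour m {a, d}"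
  show False
  proof (cases "a = m")
    case True
    then have "[2 * b = 2 * d] (mod m)"
      using eq assms by (simp add: round_robin_colour_pair cong_def)
    with \<open>odd m\<close> have "[b = d] (mod m)"
      by (simp add: cong_mult_lcancel_nat)
    with True assms show False
      using cong_less_modulus_unique_nat by fastforce
  next
    case False
    define partner where "partner x = (if x = m then a else x)" for x
    have colour: "round_robin_colour m {a, x} = (a + partner x) mod m" if "x \<noteq> a" for x
      using that False by (simp add: round_robin_colour_pair partner_def add.commute mult_2)
    have "[a + partner b = a + partner d] (mod m)"
      using eq colour assms by (simp add: cong_def)
    then have "[partner b = partner d] (mod m)"
      by (simp add: cong_add_lcancel_nat)
    moreover have "partner b < m" "partner d < m"
      using False assms by (auto simp: partner_def)
    ultimately have "partner b = partner d"
      by (rule cong_less_modulus_unique_nat)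
    with assms show False
      by (auto simp: partner_def split: if_splits)
  qed
qed

lemma simplicial_complex_face:
  "simplicial_complex C \<Longrightarrow> \<sigma> \<in> C \<Longrightarrow> \<tau> \<subseteq> \<sigma> \<Longrightarrow> \<tau> \<noteq> {} \<Longrightarrow> \<tau> \<in> C"
  unfolding simplicial_complex_def by blast

lemma skeleton_colouring_less:
  assumes "simplicial_complex C" "proper_skeleton_colouring C n c" "\<sigma> \<in> C" "u \<in> \<sigma>"
  shows "c u < n"
proof -
  have "{u} \<in> C"
    by (rule simplicial_complex_face[OF assms(1,3)]) (use assms(4) in auto)
  with assms(2) show ?thesis
    by (simp add: proper_skeleton_colouring_def vertices_def)
qed

lemma skeleton_colouring_distinct:
  assumes "simplicial_complex C" "proper_skeleton_colouring C n c" "\<sigma> \<in> C"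
    and "u \<in> \<sigma>" "v \<in> \<sigma>" "u \<noteq> v"
  shows "c u \<noteq> c v"
proof -
  have "{u, v} \<in> C"
    by (rule simplicial_complex_face[OF assms(1,3)]) (use assms(4,5) in auto)
  with \<open>u \<noteq> v\<close> have "{u, v} \<in> edges C"
    by (simp add: edges_def)
  with assms(2) show ?thesis
    by (simp add: proper_skeleton_colouring_def)
qed

lemma two_subset_of_three:
  assumes "card e = 2" "e \<subseteq> {x, y, z}"
  shows "e = {x, y} \<or> e = {x, z} \<or> e = {y, z}"
proof -
  obtain u v where e: "e = {u, v}" "u \<noteq> v"
    using assms(1) by (meson card_2_iff)
  then have "u \<in> {x, y, z}" "v \<in> {x, y, z}"
    using assms(2) by auto
  with e show ?thesis
    by (auto simp: insert_commute)
qed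

lemma two_edges_of_triangle:
  assumes "card f = 3" "card e1 = 2" "card e2 = 2" "e1 \<subseteq> f" "e2 \<subseteq> f" "e1 \<noteq> e2"
  obtains p q r where "e1 = {p, q}" "e2 = {p, r}" "p \<noteq> q" "p \<noteq> r" "q \<noteq> r"
proof -
  obtain x y z where f: "f = {x, y, z}" "x \<noteq> y" "x \<noteq> z" "y \<noteq> z"
    using assms(1) by (auto simp: card_3_iff)
  have "e1 \<subseteq> {x, y, z}" "e2 \<subseteq> {x, y, z}"
    using assms(4,5) f(1) by simp_all
  then have "e1 = {x, y} \<or> e1 = {x, z} \<or> e1 = {y, z}" "e2 = {x, y} \<or> e2 = {x, z} \<or> e2 = {y, z}"
    using assms(2,3) by (simp_all add: two_subset_of_three)
  then show ?thesis
    using assms(6) f(2-4)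
      that[of x y z] that[of y x z] that[of x z y] that[of z x y] that[of y z x] that[of z y x]
    by (elim disjE) (simp_all add: insert_commute)
qed

lemma proper_edge_colouring_from_complete_graph:
  assumes C: "simplicial_complex C" and c: "proper_skeleton_colouring C n c"
    and less: "\<And>a b. a < n \<Longrightarrow> b < n \<Longrightarrow> a \<noteq> b \<Longrightarrow> \<chi> {a, b} < r"
    and adjacent: "\<And>a b d. a < n \<Longrightarrow> b < n \<Longrightarrow> d < n \<Longrightarrow> a \<noteq> b \<Longrightarrow> a \<noteq> d \<Longrightarrow> b \<noteq> d
      \<Longrightarrow> \<chi> {a, b} \<noteq> \<chi> {a, d}"
  shows "proper_edge_colouring C r (\<lambda>e. \<chi> (c ` e))"
  unfolding proper_edge_colouring_def
proof (intro conjI ballI allI impI)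
  fix e assume "e \<in> edges C"
  then have "e \<in> C" "card e = 2"
    by (simp_all add: edges_def)
  then obtain u v where uv: "e = {u, v}" "u \<noteq> v"
    by (meson card_2_iff)
  then have "u \<in> e" "v \<in> e"
    by simp_all
  note less_n = skeleton_colouring_less[OF C c \<open>e \<in> C\<close>]
    and distinct = skeleton_colouring_distinct[OF C c \<open>e \<in> C\<close>]
  have "\<chi> {c u, c v} < r"
    using \<open>u \<in> e\<close> \<open>v \<in> e\<close> \<open>u \<noteq> v\<close> by (intro less less_n distinct)
  with uv show "\<chi> (c ` e) < r"
    by simp
next
  fix f e1 e2
  assume f: "f \<in> cells2 C"
    and e: "e1 \<in> edges C \<and> e2 \<in> edges C \<and> e1 \<subseteq> f \<and> e2 \<subseteq> f \<and> e1 \<noteq> e2"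
  then have "f \<in> C" "card f = 3" "card e1 = 2" "card e2 = 2" "e1 \<subseteq> f" "e2 \<subseteq> f" "e1 \<noteq> e2"
    by (simp_all add: cells2_def edges_def)
  then obtain p q r where pqr: "e1 = {p, q}" "e2 = {p, r}" "p \<noteq> q" "p \<noteq> r" "q \<noteq> r"
    by (meson two_edges_of_triangle)
  with \<open>e1 \<subseteq> f\<close> \<open>e2 \<subseteq> f\<close> have "p \<in> f" "q \<in> f" "r \<in> f"
    by auto
  note less_n = skeleton_colouring_less[OF C c \<open>f \<in> C\<close>]
    and distinct = skeleton_colouring_distinct[OF C c \<open>f \<in> C\<close>]
  have "\<chi> {c p, c q} \<noteq> \<chi> {c p, c r}"
    using \<open>p \<in> f\<close> \<open>q \<in> f\<close> \<open>r \<in> f\<close> pqr(3-5)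
    by (intro adjacent less_n distinct)
  with pqr show "\<chi> (c ` e1) \<noteq> \<chi> (c ` e2)"
    by simp
qed

theorem proposition7p1:
  fixes C :: "'a set set" and k :: nat
  assumes "k > 0"
    and "simplicial_complex C"
    and "\<exists>c. proper_skeleton_colouring C (2 * k) c"
  shows "\<exists>col. proper_edge_colouring C (2 * k - 1) col"
proof -
  obtain c where c: "proper_skeleton_colouring C (2 * k) c"
    using assms(3) by blast
  have "proper_edge_colouring C (2 * k - 1) (\<lambda>e. round_robin_colour (2 * k - 1) (c ` e))"
    using \<open>k > 0\<close>
    by (intro proper_edge_colouring_from_complete_graph[OF assms(2) c] round_robin_colour_less
        round_robin_colour_adjacent_distinct) auto
  then show ?thesis
    by blast
qed

end
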